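(* Let $(L_1,M_1,L_2,M_2)$ be a positive quadruple of Lagrangians in $\mathbf R^{2n}$. Then: (1) there exists a symplectic basis $(\mathbf e,\mathbf f)$ in standard position with respect to $(L_1,M_1,L_2,M_2)$, with associated diagonal matrix $\Lambda$; (2) any other symplectic basis in standard position with respect to $(L_1,M_1,L_2,M_2)$ is of the form $(\mathbf e\cdot h,\mathbf f\cdot h)$ for some $h\in \mathrm{O}(n)$ commuting with $\Lambda$; (3) setting $u=\Lambda^{1/2}$, the pair $(\mathbf e',\mathbf f')\mathrel{:=}(\mathbf f\cdot u,\,-\mathbf e\cdot u^{-1})$ is a symplectic basis in standard position with respect to $(L_2,M_2,L_1,M_1)$.
   Context: $\mathbf R^{2n}$ carries the standard symplectic form $\omega(x,y)={}^T x\begin{pmatrix}0&\mathrm{Id}\\-\mathrm{Id}&0\end{pmatrix}y$; Lagrangians are $n$-dimensional subspaces on which $\omega$ vanishes, and transverse means trivial intersection. For pairwise transverse Lagrangians $L_1,M,L_2$, let $M_{L_1\to L_2}\colon L_1\to L_2$ be the unique linear map whose graph $\{e+M_{L_1\to L_2}(e)\}$ is $M$; the Maslov form $[L_1,M,L_2]$ is the symmetric bilinear form $(v,w)\mapsto\omega(v,M_{L_1\to L_2}(w))$ on $L_1$. A quadruple $(L_1,M_1,L_2,M_2)$ is positive if $L_1,M_1,L_2$ and $L_2,M_2,L_1$ are pairwise transverse triples and $[L_1,M_1,L_2]$ and $[L_2,M_2,L_1]$ are positive definite. For families $\mathbf v=(v_1,\dots,v_n)$, $\mathbf w=(w_1,\dots,w_n)$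 and an $n\times n$ matrix $g$, $\mathbf v\cdot g$ is the family with $j$-th term $\sum_i v_i g_{ij}$, $\mathbf v+\mathbf w=(v_1+w_1,\dots,v_n+w_n)$, and $\omega(\mathbf v,\mathbf w)$ is the matrix $(\omega(v_i,w_j))$. A symplectic basis is a pair $(\mathbf e,\mathbf f)$ of $n$-tuples forming a basis with $\omega(\mathbf e,\mathbf e)=\omega(\mathbf f,\mathbf f)=0$ and $\omega(\mathbf e,\mathbf f)=\mathrm{Id}$. A symplectic basis $(\mathbf e,\mathbf f)$ is in standard position with respect to a positive quadruple $(L_1,M_1,L_2,M_2)$ if there is a diagonal matrix $\Lambda$ with positive nondecreasing diagonal entries such that $L_1=\mathrm{Span}(\mathbf e)$, $L_2=\mathrm{Span}(\mathbf f)$, $M_1=\mathrm{Span}(\mathbf e+\mathbf f)$, $M_2=\mathrm{Span}(\mathbf e-\mathbf f\cdot\Lambda)$. *)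

theory Defs
  imports "HOL-Analysis.Analysis"
begin

text \<open>Ambient space R^{2n} is modelled as real^('n + 'n): coordinates Inl i are the first
  n coordinates, Inr i the last n.  n = CARD('n).\<close>

type_synonym 'n sp = "real ^ ('n + 'n)"

definition omega :: "'n::finite sp \<Rightarrow> 'n sp \<Rightarrow> real" where
  "omega x y = (\<Sum>i\<in>UNIV. x $ Inl i * y $ Inr i - x $ Inr i * y $ Inl i)"

definition lagrangian :: "'n::finite sp set \<Rightarrow> bool" where
  "lagrangian L \<longleftrightarrow> subspace L \<and> dim L = CARD('n) \<and> (\<forall>x\<in>L. \<forall>y\<in>L. omega x y = 0)"

definition transverse :: "'n::finite sp set \<Rightarrow> 'n sp set \<Rightarrow> bool" where
  "transverse L M \<longleftrightarrow> L \<inter> M = {0}"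

definition pw_transverse :: "'n::finite sp set \<Rightarrow> 'n sp set \<Rightarrow> 'n sp set \<Rightarrow> bool" where
  "pw_transverse A B C \<longleftrightarrow> lagrangian A \<and> lagrangian B \<and> lagrangian C \<and>
     transverse A B \<and> transverse B C \<and> transverse A C"

definition graph_map :: "'n::finite sp set \<Rightarrow> 'n sp set \<Rightarrow> 'n sp set \<Rightarrow> 'n sp \<Rightarrow> 'n sp" where
  "graph_map L1 M L2 e = (THE w. w \<in> L2 \<and> e + w \<in> M)"

definition maslov_form :: "'n::finite sp set \<Rightarrow> 'n sp set \<Rightarrow> 'n sp set \<Rightarrow> 'n sp \<Rightarrow> 'n sp \<Rightarrow> real" where
  "maslov_form L1 M L2 v w = omega v (graph_map L1 M L2 w)"

definition pos_def_on :: "'n::finite sp set \<Rightarrow> ('n sp \<Rightarrow> 'n sp \<Rightarrow> real) \<Rightarrow> bool" where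
  "pos_def_on L B \<longleftrightarrow> (\<forall>v\<in>L. v \<noteq> 0 \<longrightarrow> B v v > 0)"

definition positive_quadruple :: "'n::finite sp set \<Rightarrow> 'n sp set \<Rightarrow> 'n sp set \<Rightarrow> 'n sp set \<Rightarrow> bool" where
  "positive_quadruple L1 M1 L2 M2 \<longleftrightarrow>
     pw_transverse L1 M1 L2 \<and> pw_transverse L2 M2 L1 \<and>
     pos_def_on L1 (maslov_form L1 M1 L2) \<and> pos_def_on L2 (maslov_form L2 M2 L1)"

definition fam_mult :: "('n::finite \<Rightarrow> 'n sp) \<Rightarrow> real^'n^'n \<Rightarrow> ('n \<Rightarrow> 'n sp)" (infixl "\<cdot>\<^sub>f" 70) where
  "fam_mult v g = (\<lambda>j. \<Sum>i\<in>UNIV. g $ i $ j *\<^sub>R v i)"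

definition omega_mat :: "('n::finite \<Rightarrow> 'n sp) \<Rightarrow> ('n \<Rightarrow> 'n sp) \<Rightarrow> real^'n^'n" where
  "omega_mat v w = (\<chi> i j. omega (v i) (w j))"

definition symplectic_basis :: "('n::finite \<Rightarrow> 'n sp) \<Rightarrow> ('n \<Rightarrow> 'n sp) \<Rightarrow> bool" where
  "symplectic_basis e f \<longleftrightarrow>
     inj (case_sum e f) \<and> independent (range (case_sum e f)) \<and> span (range (case_sum e f)) = UNIV \<and>
     omega_mat e e = 0 \<and> omega_mat f f = 0 \<and> omega_mat e f = mat 1"

definition std_diag :: "real^('n::{finite,linorder})^('n::{finite,linorder}) \<Rightarrow> bool" where
  "std_diag \<Lambda> \<longleftrightarrow> (\<forall>i j. i \<noteq> j \<longrightarrow> \<Lambda> $ i $ j = 0) \<and> (\<forall>i. \<Lambda> $ i $ i > 0) \<and>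
     (\<forall>i j. i \<le> j \<longrightarrow> \<Lambda> $ i $ i \<le> \<Lambda> $ j $ j)"

definition std_position_with ::
  "(('n::{finite,linorder}) \<Rightarrow> ('n::{finite,linorder}) sp) \<Rightarrow> ('n \<Rightarrow> 'n sp) \<Rightarrow> real^('n::{finite,linorder})^('n::{finite,linorder}) \<Rightarrow>
   'n sp set \<Rightarrow> 'n sp set \<Rightarrow> 'n sp set \<Rightarrow> 'n sp set \<Rightarrow> bool" where
  "std_position_with e f \<Lambda> L1 M1 L2 M2 \<longleftrightarrow> std_diag \<Lambda> \<and>
     L1 = span (range e) \<and> L2 = span (range f) \<and>
     M1 = span (range (\<lambda>i. e i + f i)) \<and>
     M2 = span (range (\<lambda>i. e i - (f \<cdot>\<^sub>f \<Lambda>) i))"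

definition std_position ::
  "(('n::{finite,linorder}) \<Rightarrow> ('n::{finite,linorder}) sp) \<Rightarrow> ('n \<Rightarrow> 'n sp) \<Rightarrow>
   'n sp set \<Rightarrow> 'n sp set \<Rightarrow> 'n sp set \<Rightarrow> 'n sp set \<Rightarrow> bool" where
  "std_position e f L1 M1 L2 M2 \<longleftrightarrow> (\<exists>\<Lambda>. std_position_with e f \<Lambda> L1 M1 L2 M2)"

definition diag_sqrt :: "real^('n::finite)^('n::finite) \<Rightarrow> real^'n^'n" where
  "diag_sqrt \<Lambda> = (\<chi> i j. if i = j then sqrt (\<Lambda> $ i $ i) else 0)"

end

theory Submission
  imports Defs
begin

text \<open>
  The Maslov form \<open>B(v, w) = \<omega>(v, T w)\<close> of \<open>(L1, M1, L2)\<close>, where \<open>T : L1 \<rightarrow> L2\<close> is the graph map of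
  \<open>M1\<close>, is an inner product on \<open>L1\<close>, and \<open>Q(v, w) = [L2, M2, L1](T v, T w)\<close> is a second positive
  definite form on \<open>L1\<close>. Maximising the Rayleigh quotient \<open>Q/B\<close> diagonalises \<open>Q\<close> in a
  \<open>B\<close>-orthonormal basis \<open>e\<close> of \<open>L1\<close> with decreasing values \<open>\<mu>\<^sub>i = Q(e\<^sub>i, e\<^sub>i)\<close>. Then \<open>(e, T e)\<close> is a
  symplectic basis, \<open>M1\<close> is spanned by \<open>e + T e\<close>, and the graph map of \<open>M2\<close> sends \<open>T e\<^sub>j\<close> to
  \<open>-\<mu>\<^sub>j e\<^sub>j\<close>, so \<open>\<Lambda> = diag(1/\<mu>)\<close> puts the basis in standard position.

  For uniqueness, the transition matrix \<open>h\<close> between two bases in standard position is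
  orthogonal because both are symplectic, and the condition on \<open>M2\<close> says that \<open>h\<close> intertwines
  the two diagonal matrices. Since \<open>det h \<noteq> 0\<close>, some permutation runs through nonzero entries
  of \<open>h\<close>; it matches the two sorted diagonals, which therefore coincide, so \<open>h\<close> commutes
  with \<open>\<Lambda>\<close>. The last claim is a rescaling of the basis by the square root of \<open>\<Lambda>\<close>.
\<close>

section \<open>The symplectic form\<close>

lemma linear_omega_left: "linear (\<lambda>x. omega x z)"
  by (rule linearI) (simp_all add: omega_def algebra_simps sum.distrib sum_subtractf sum_distrib_left)

lemma linear_omega_right: "linear (\<lambda>z. omega x z)"
  by (rule linearI) (simp_all add: omega_def algebra_simps sum.distrib sum_subtractf sum_distrib_left)

lemmas omega_simps =
  linear_add[OF linear_omega_left] linear_add[OF linear_omega_right]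
  linear_diff[OF linear_omega_left] linear_diff[OF linear_omega_right]
  linear_scale[OF linear_omega_left] linear_scale[OF linear_omega_right]
  linear_neg[OF linear_omega_left] linear_neg[OF linear_omega_right]
  linear_0[OF linear_omega_left] linear_0[OF linear_omega_right]
  linear_sum[OF linear_omega_left] linear_sum[OF linear_omega_right]

lemma omega_antisym: "omega y x = - omega x y"
  by (simp add: omega_def algebra_simps sum_subtractf)

lemma omega_nondegenerate:
  assumes "\<And>z. omega y z = 0"
  shows "y = 0"
proof -
  have "y $ Inl i = 0" "y $ Inr i = 0" for i
    using assms[of "axis (Inr i) 1"] assms[of "axis (Inl i) 1"]
    by (simp_all add: omega_def axis_def if_distrib[of "times _"] sum_negf cong: if_cong)
  then show ?thesis
    by (metis sum.exhaust vec_eq_iff zero_index)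
qed

lemma omega_eq_0_on_span:
  "(\<And>s. s \<in> S \<Longrightarrow> omega y s = 0) \<Longrightarrow> z \<in> span S \<Longrightarrow> omega y z = 0"
  by (rule linear_eq_0_on_span[OF linear_omega_right])

lemma omega_isotropic_span:
  assumes iso: "\<And>i j. omega (v i) (v j) = 0"
    and x: "x \<in> span (range v)" and y: "y \<in> span (range v)"
  shows "omega x y = 0"
proof -
  have "omega (v i) y = 0" for i
    by (rule omega_eq_0_on_span[OF _ y]) (auto simp: iso)
  then have "omega y x = 0"
    by (intro omega_eq_0_on_span[OF _ x]) (auto simp: omega_antisym[of y])
  then show ?thesis
    using omega_antisym[of x y] by simp
qed

lemma bilinear_omega_linear:
  "linear F \<Longrightarrow> linear G \<Longrightarrow> bilinear (\<lambda>x y. omega (F x) (G y))"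
  unfolding bilinear_def
  using linear_compose[OF _ linear_omega_left] linear_compose[OF _ linear_omega_right]
  by (auto simp: comp_def)

section \<open>Symplectic bases\<close>

lemma biorthogonal_inj:
  assumes "\<And>i j. \<phi> j (b i) = (if i = j then 1 else (0::real))"
  shows "inj b"
proof (rule injI)
  fix i j
  assume "b i = b j"
  then have "\<phi> j (b i) = 1"
    using assms[where i = j and j = j] by simp
  then show "i = j"
    using assms[where i = i and j = j] by (simp split: if_splits)
qed

lemma biorthogonal_independent:
  fixes b :: "'i \<Rightarrow> 'a::real_vector" and \<phi> :: "'i \<Rightarrow> 'a \<Rightarrow> real"
  assumes lin: "\<And>j. linear (\<phi> j)" and dual: "\<And>i j. \<phi> j (b i) = (if i = j then 1 else 0)"
  shows "independent (range b)"
  unfolding dependent_def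
proof
  assume "\<exists>a\<in>range b. a \<in> span (range b - {a})"
  then obtain i where i: "b i \<in> span (range b - {b i})"
    by blast
  have "\<phi> i (b i) = 0"
    by (rule linear_eq_0_on_span[OF lin _ i]) (auto simp: dual)
  then show False
    using dual[of i i] by simp
qed

lemma symplectic_basisI:
  fixes e f :: "'n::finite \<Rightarrow> 'n sp"
  assumes ee: "\<And>i j. omega (e i) (e j) = 0" and ff: "\<And>i j. omega (f i) (f j) = 0"
    and ef: "\<And>i j. omega (e i) (f j) = (if i = j then 1 else 0)"
  shows "symplectic_basis e f"
proof -
  define \<phi> where "\<phi> = case_sum (\<lambda>j z. omega z (f j)) (\<lambda>j z. omega (e j) z)"
  have lin: "linear (\<phi> k)" for k
    by (cases k) (simp_all add: \<phi>_def linear_omega_left linear_omega_right)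
  have dual: "\<phi> l (case_sum e f k) = (if k = l then 1 else 0)" for k l
    by (cases k; cases l) (simp_all add: \<phi>_def ee ff ef)
  have inj: "inj (case_sum e f)" and indep: "independent (range (case_sum e f))"
    using biorthogonal_inj[of \<phi>, OF dual] biorthogonal_independent[of \<phi>, OF lin dual] by blast+
  have "dim (range (case_sum e f)) = DIM('n sp)"
    using dim_eq_card_independent[OF indep] card_image[OF inj] by simp
  then have "span (range (case_sum e f)) = UNIV"
    using dim_eq_full by blast
  moreover have "omega_mat e e = 0" "omega_mat f f = 0" "omega_mat e f = mat 1"
    by (simp_all add: omega_mat_def vec_eq_iff mat_def ee ff ef)
  ultimately show ?thesis
    unfolding symplectic_basis_def using inj indep by blast
qed

lemma symplectic_basisD:
  assumes "symplectic_basis e f"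
  shows "omega (e i) (e j) = 0" "omega (f i) (f j) = 0"
    and "omega (e i) (f j) = (if i = j then 1 else 0)"
    and "omega (f i) (e j) = (if i = j then -1 else 0)"
    and "span (range (case_sum e f)) = UNIV"
proof -
  have m: "omega_mat e e = 0" "omega_mat f f = 0" "omega_mat e f = mat 1"
    and "span (range (case_sum e f)) = UNIV"
    using assms unfolding symplectic_basis_def by auto
  then show "omega (e i) (e j) = 0" "omega (f i) (f j) = 0"
    and ef: "\<And>i j. omega (e i) (f j) = (if i = j then 1 else 0)"
    and "span (range (case_sum e f)) = UNIV"
    by (auto simp: omega_mat_def mat_def vec_eq_iff)
  show "omega (f i) (e j) = (if i = j then -1 else 0)"
    using omega_antisym[of "f i" "e j"] ef[of j i] by auto
qed

lemma symplectic_basis_expansion: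
  assumes sb: "symplectic_basis e f"
  shows "x = (\<Sum>i\<in>UNIV. omega x (f i) *\<^sub>R e i) - (\<Sum>i\<in>UNIV. omega x (e i) *\<^sub>R f i)"
proof -
  define y where "y = x - ((\<Sum>i\<in>UNIV. omega x (f i) *\<^sub>R e i) - (\<Sum>i\<in>UNIV. omega x (e i) *\<^sub>R f i))"
  note d = symplectic_basisD[OF sb]
  have "omega y s = 0" if "s \<in> range (case_sum e f)" for s
    using that unfolding y_def
    by (auto simp: omega_simps d(1-4) if_distrib[of "times _"] split: sum.splits cong: if_cong)
  then have "omega y z = 0" for z
    by (rule omega_eq_0_on_span[of "range (case_sum e f)"]) (auto simp: d(5))
  then have "y = 0"
    by (rule omega_nondegenerate)
  then show ?thesis
    unfolding y_def by simp
qed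

lemma symplectic_basis_expansion_e:
  assumes "symplectic_basis e f" "\<And>i. omega x (e i) = 0"
  shows "x = (\<Sum>i\<in>UNIV. omega x (f i) *\<^sub>R e i)"
  using symplectic_basis_expansion[OF assms(1), of x] by (simp add: assms(2))

lemma symplectic_basis_expansion_f:
  assumes "symplectic_basis e f" "\<And>i. omega x (f i) = 0"
  shows "x = - (\<Sum>i\<in>UNIV. omega x (e i) *\<^sub>R f i)"
  using symplectic_basis_expansion[OF assms(1), of x] by (simp add: assms(2))

lemma span_range_scaleR:
  fixes g :: "'i \<Rightarrow> 'a::real_vector"
  assumes "\<And>j. c j \<noteq> 0"
  shows "span (range (\<lambda>j. c j *\<^sub>R g j)) = span (range g)"
proof -
  have "g j = inverse (c j) *\<^sub>R (c j *\<^sub>R g j)" for j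
    using assms[of j] by simp
  then have "range g \<subseteq> span (range (\<lambda>j. c j *\<^sub>R g j))"
    by (metis (no_types, lifting) image_subset_iff rangeI span_base span_mul)
  moreover have "range (\<lambda>j. c j *\<^sub>R g j) \<subseteq> span (range g)"
    by (auto intro: span_mul span_base)
  ultimately show ?thesis
    by (simp add: span_eq)
qed

section \<open>Lagrangians and graph maps\<close>

lemma lagrangian_isotropic: "lagrangian L \<Longrightarrow> x \<in> L \<Longrightarrow> y \<in> L \<Longrightarrow> omega x y = 0"
  unfolding lagrangian_def by blast

lemma lagrangian_eq_span:
  fixes v w :: "'n::finite \<Rightarrow> 'n sp"
  assumes L: "lagrangian L" and v: "range v \<subseteq> L"
    and vw: "\<And>i j. omega (v i) (w j) = (if i = j then 1 else 0)"
  shows "L = span (range v)"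
proof -
  have inj: "inj v"
    by (rule biorthogonal_inj[of "\<lambda>j x. omega x (w j)"]) (rule vw)
  have "independent (range v)"
    by (rule biorthogonal_independent[of "\<lambda>j x. omega x (w j)"]) (simp_all add: linear_omega_left vw)
  then have "dim (span (range v)) = dim L"
    using L dim_eq_card_independent[OF \<open>independent (range v)\<close>] card_image[OF inj] by (simp add: lagrangian_def)
  moreover have "span (range v) \<subseteq> L"
    using L v by (simp add: lagrangian_def span_minimal)
  ultimately show ?thesis
    using L subspace_dim_equal[of "span (range v)" L] by (simp add: lagrangian_def)
qed

lemma transverse_lagrangians_decompose:
  fixes L M :: "'n::finite sp set"
  assumes L: "lagrangian L" and M: "lagrangian M" and tr: "transverse M L"
  obtains m z where "m \<in> M" "z \<in> L" "y = m + z"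
proof -
  have sM: "subspace M" and sL: "subspace L"
    using L M by (auto simp: lagrangian_def)
  let ?S = "{x + z |x z. x \<in> M \<and> z \<in> L}"
  have "dim ?S + dim (M \<inter> L) = dim M + dim L"
    by (rule dim_sums_Int[OF sM sL])
  then have "dim ?S = DIM('n sp)"
    using L M tr by (simp add: lagrangian_def transverse_def)
  then have "span ?S = UNIV"
    by (simp only: dim_eq_full)
  moreover have "span ?S = ?S"
    using subspace_sums[OF sM sL] by (simp only: span_eq_iff)
  ultimately have "y \<in> ?S"
    by blast
  then show ?thesis
    using that by blast
qed

lemma graph_map_ex1:
  fixes L M :: "'n::finite sp set"
  assumes L: "lagrangian L" and M: "lagrangian M" and tr: "transverse M L"
  shows "\<exists>!w. w \<in> L \<and> y + w \<in> M"
proof -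
  have sM: "subspace M" and sL: "subspace L"
    using L M by (auto simp: lagrangian_def)
  obtain m z where mz: "m \<in> M" "z \<in> L" "y = m + z"
    using transverse_lagrangians_decompose[OF assms] .
  have unique: "w = w'" if "w \<in> L" "y + w \<in> M" "w' \<in> L" "y + w' \<in> M" for w w'
  proof -
    have "(y + w) - (y + w') \<in> M" "w - w' \<in> L"
      using that subspace_diff[OF sM] subspace_diff[OF sL] by blast+
    then have "w - w' \<in> M \<inter> L"
      by simp
    then show ?thesis
      using tr unfolding transverse_def by simp
  qed
  have "- z \<in> L" "y + - z \<in> M"
    using mz sL by (simp_all add: subspace_neg)
  then show ?thesis
    using unique by blast
qed

lemma graph_map:
  assumes "lagrangian L" "lagrangian M" "transverse M L"
  shows "graph_map K M L y \<in> L" "y + graph_map K M L y \<in> M"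
  using theI'[OF graph_map_ex1[OF assms]] unfolding graph_map_def by auto

lemma graph_map_eqI:
  assumes "lagrangian L" "lagrangian M" "transverse M L" "w \<in> L" "y + w \<in> M"
  shows "graph_map K M L y = w"
  unfolding graph_map_def by (rule the1_equality[OF graph_map_ex1[OF assms(1-3)]]) (simp add: assms(4,5))

lemma linear_graph_map:
  assumes "lagrangian L" "lagrangian M" "transverse M L"
  shows "linear (graph_map K M L)"
proof -
  have sM: "subspace M" and sL: "subspace L"
    using assms by (auto simp: lagrangian_def)
  note T = graph_map[OF assms, where K = K]
  show ?thesis
  proof (rule linearI)
    fix x y
    have "x + y + (graph_map K M L x + graph_map K M L y) \<in> M"
      using subspace_add[OF sM T(2)[of x] T(2)[of y]] by (simp add: algebra_simps)
    then show "graph_map K M L (x + y) = graph_map K M L x + graph_map K M L y"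
      by (intro graph_map_eqI[OF assms] subspace_add[OF sL] T)
  next
    fix c x
    have "c *\<^sub>R x + c *\<^sub>R graph_map K M L x \<in> M"
      using subspace_scale[OF sM T(2)[of x], of c] by (simp add: scaleR_add_right)
    then show "graph_map K M L (c *\<^sub>R x) = c *\<^sub>R graph_map K M L x"
      by (intro graph_map_eqI[OF assms] subspace_scale[OF sL] T)
  qed
qed

lemma maslov_form_sym:
  assumes L1: "lagrangian L1" and M: "lagrangian M" and L2: "lagrangian L2"
    and tr: "transverse M L2" and v: "v \<in> L1" and w: "w \<in> L1"
  shows "maslov_form L1 M L2 v w = maslov_form L1 M L2 w v"
proof -
  note T = graph_map[OF L2 M tr]
  have "omega (v + graph_map L1 M L2 v) (w + graph_map L1 M L2 w) = 0"
    by (rule lagrangian_isotropic[OF M T(2) T(2)])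
  moreover have "omega v w = 0" "omega (graph_map L1 M L2 v) (graph_map L1 M L2 w) = 0"
    by (rule lagrangian_isotropic[OF L1 v w], rule lagrangian_isotropic[OF L2 T(1) T(1)])
  ultimately show ?thesis
    unfolding maslov_form_def by (simp add: omega_simps omega_antisym[of "graph_map L1 M L2 v"])
qed

section \<open>Simultaneous diagonalisation of two quadratic forms\<close>

lemma quadratic_nonpos_imp_linear_coeff_zero:
  fixes a c :: real
  assumes "\<And>t. 2 * t * a + t * t * c \<le> 0"
  shows "a = 0"
proof -
  define k where "k = \<bar>c\<bar> + 1"
  have k: "k > 0" "2 * k + c > 0"
    unfolding k_def by auto
  have "a * a * (2 * k + c) = (2 * (a / k) * a + (a / k) * (a / k) * c) * (k * k)"
    using k by (simp add: field_simps)
  also have "\<dots> \<le> 0"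
    using assms[of "a / k"] by (intro mult_nonpos_nonneg) auto
  finally have "a * a \<le> 0"
    using k(2) by (simp add: mult_le_0_iff)
  then show "a = 0"
    using mult_le_0_iff[of a a] by auto
qed

context
  fixes W :: "'a::euclidean_space set" and B Q :: "'a \<Rightarrow> 'a \<Rightarrow> real"
  assumes W: "subspace W" and bilinear_B: "bilinear B" and bilinear_Q: "bilinear Q"
    and sym_B: "\<And>x y. x \<in> W \<Longrightarrow> y \<in> W \<Longrightarrow> B x y = B y x"
    and sym_Q: "\<And>x y. x \<in> W \<Longrightarrow> y \<in> W \<Longrightarrow> Q x y = Q y x"
    and pos_B: "\<And>x. x \<in> W \<Longrightarrow> x \<noteq> 0 \<Longrightarrow> B x x > 0"
begin

lemmas bilinear_simps =
  bilinear_ladd[OF bilinear_B] bilinear_radd[OF bilinear_B]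
  bilinear_lmul[OF bilinear_B] bilinear_rmul[OF bilinear_B]
  bilinear_lzero[OF bilinear_B] bilinear_rzero[OF bilinear_B]
  bilinear_rsub[OF bilinear_B]
  bilinear_ladd[OF bilinear_Q] bilinear_radd[OF bilinear_Q]
  bilinear_lmul[OF bilinear_Q] bilinear_rmul[OF bilinear_Q]
  bilinear_lzero[OF bilinear_Q] bilinear_rzero[OF bilinear_Q]

lemma rayleigh_quotient_max_on_sphere:
  assumes V: "subspace V" "V \<subseteq> W" and nz: "V \<noteq> {0}"
  obtains v where "v \<in> V" "norm v = 1"
    "\<And>y. y \<in> V \<Longrightarrow> norm y = 1 \<Longrightarrow> Q y y / B y y \<le> Q v v / B v v"
proof -
  let ?K = "V \<inter> sphere 0 1"
  have "compact ?K"
    using closed_subspace[OF V(1)] compact_sphere by (rule closed_Int_compact)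
  obtain x where x: "x \<in> V" "x \<noteq> 0"
    using nz V(1) subspace_0 by blast
  then have "x /\<^sub>R norm x \<in> ?K"
    using V(1) by (simp add: subspace_scale)
  then have "?K \<noteq> {}"
    by blast
  have bQ: "bounded_bilinear Q" and bB: "bounded_bilinear B"
    using bilinear_Q bilinear_B bilinear_conv_bounded_bilinear by blast+
  have "continuous_on ?K (\<lambda>x. Q x x)"
    by (rule bounded_bilinear.continuous_on[OF bQ continuous_on_id continuous_on_id])
  moreover have "continuous_on ?K (\<lambda>x. B x x)"
    by (rule bounded_bilinear.continuous_on[OF bB continuous_on_id continuous_on_id])
  moreover have "B x x \<noteq> 0" if "x \<in> ?K" for x
  proof -
    have "x \<in> W" "x \<noteq> 0"
      using that V(2) by auto
    then show ?thesis
      using pos_B by fastforce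
  qed
  ultimately have "continuous_on ?K (\<lambda>x. Q x x / B x x)"
    by (intro continuous_on_divide) blast+
  then obtain v where "v \<in> ?K" "\<And>y. y \<in> ?K \<Longrightarrow> Q y y / B y y \<le> Q v v / B v v"
    using continuous_attains_sup[OF \<open>compact ?K\<close> \<open>?K \<noteq> {}\<close>] by blast
  then show ?thesis
    by (intro that) auto
qed

lemma rayleigh_quotient_attains_max:
  assumes V: "subspace V" "V \<subseteq> W" and nz: "V \<noteq> {0}"
  shows "\<exists>v\<in>V. B v v = 1 \<and> (\<forall>x\<in>V. Q x x \<le> Q v v * B x x)"
proof -
  obtain v0 where v0: "v0 \<in> V" "norm v0 = 1"
    and max: "\<And>y. y \<in> V \<Longrightarrow> norm y = 1 \<Longrightarrow> Q y y / B y y \<le> Q v0 v0 / B v0 v0"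
    using rayleigh_quotient_max_on_sphere[OF assms] by blast
  have homogeneous: "Q (c *\<^sub>R y) (c *\<^sub>R y) / B (c *\<^sub>R y) (c *\<^sub>R y) = Q y y / B y y" if "c \<noteq> 0" for c y
    using that by (simp add: bilinear_simps)
  define v where "v = (1 / sqrt (B v0 v0)) *\<^sub>R v0"
  have "v0 \<in> W" "v0 \<noteq> 0"
    using v0 V(2) by auto
  then have "B v0 v0 > 0"
    by (rule pos_B)
  then have "B v v = 1" and Qv: "Q v v = Q v0 v0 / B v0 v0"
    unfolding v_def by (simp_all add: bilinear_simps field_simps)
  moreover have "v \<in> V"
    using v0(1) V(1) unfolding v_def by (simp add: subspace_scale)
  moreover have "Q y y \<le> Q v v * B y y" if y: "y \<in> V" for y
  proof (cases "y = 0")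
    case True
    then show ?thesis
      by (simp add: bilinear_simps)
  next
    case False
    then have "Q ((1 / norm y) *\<^sub>R y) ((1 / norm y) *\<^sub>R y) / B ((1 / norm y) *\<^sub>R y) ((1 / norm y) *\<^sub>R y)
        \<le> Q v v"
      using max[of "(1 / norm y) *\<^sub>R y"] y V(1) Qv by (simp add: subspace_scale)
    then have "Q y y / B y y \<le> Q v v"
      using homogeneous[of "1 / norm y" y] False by simp
    then show ?thesis
      using pos_B[of y] y V(2) False by (auto simp: divide_le_eq)
  qed
  ultimately show ?thesis
    by blast
qed

lemma rayleigh_max_orthogonal:
  assumes V: "subspace V" "V \<subseteq> W" and v: "v \<in> V" "B v v = 1"
    and max: "\<forall>x\<in>V. Q x x \<le> Q v v * B x x"
    and w: "w \<in> V" "B v w = 0"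
  shows "Q v w = 0"
proof (rule quadratic_nonpos_imp_linear_coeff_zero)
  fix t :: real
  have "v + t *\<^sub>R w \<in> V"
    using V(1) v(1) w(1) by (simp add: subspace_add subspace_scale)
  then have "Q (v + t *\<^sub>R w) (v + t *\<^sub>R w) \<le> Q v v * B (v + t *\<^sub>R w) (v + t *\<^sub>R w)"
    using max by blast
  moreover have "Q w v = Q v w" "B w v = B v w"
    using V(2) v(1) w(1) by (auto intro: sym_Q sym_B)
  ultimately show "2 * t * Q v w + t * t * (Q w w - Q v v * B w w) \<le> 0"
    using v(2) w(2) by (simp add: bilinear_simps algebra_simps)
qed

lemma B_orthogonal_hyperplane:
  assumes V: "subspace V" and v: "v \<in> V" "B v v = 1"
  shows "subspace {w \<in> V. B v w = 0}" and "dim V = Suc (dim {w \<in> V. B v w = 0})"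
proof -
  let ?H = "{w \<in> V. B v w = 0}"
  show H: "subspace ?H"
    using V unfolding subspace_def by (auto simp: bilinear_simps)
  have span_V: "span (insert v ?H) = V"
  proof (rule span_subspace)
    show "insert v ?H \<subseteq> V"
      using v(1) by blast
    show "V \<subseteq> span (insert v ?H)"
    proof
      fix x
      assume "x \<in> V"
      then have "x - B v x *\<^sub>R v \<in> ?H"
        using v V by (simp add: subspace_diff subspace_scale bilinear_simps)
      then have "(x - B v x *\<^sub>R v) + B v x *\<^sub>R v \<in> span (insert v ?H)"
        by (intro span_add span_mul) (auto intro: span_base)
      then show "x \<in> span (insert v ?H)"
        by simp
    qed
  qed (rule V)
  have "v \<notin> span ?H"
  proof -
    have "v \<notin> ?H"
      using v(2) by auto
    then show ?thesis
      using span_eq_iff[THEN iffD2, OF H] by metis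
  qed
  then show "dim V = Suc (dim ?H)"
    using dim_insert[of v ?H] dim_span[of "insert v ?H"] span_V by simp
qed

lemma sorted_eigenbasis_exists:
  assumes "subspace V" "V \<subseteq> W"
  shows "\<exists>vs. length vs = dim V \<and> set vs \<subseteq> V \<and> (\<forall>v\<in>set vs. B v v = 1) \<and>
    sorted_wrt (\<lambda>v w. B v w = 0 \<and> Q v w = 0 \<and> Q w w \<le> Q v v) vs"
  using assms
proof (induction "dim V" arbitrary: V)
  case 0
  then show ?case
    by (intro exI[of _ "[]"]) simp
next
  case (Suc k)
  have "V \<noteq> {0}"
    using Suc.hyps(2) by auto
  then obtain v where v: "v \<in> V" "B v v = 1" and max: "\<forall>x\<in>V. Q x x \<le> Q v v * B x x"
    using rayleigh_quotient_attains_max[OF Suc.prems] by blast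
  define V' where "V' = {w \<in> V. B v w = 0}"
  have V': "subspace V'" "V' \<subseteq> W" and "dim V' = k"
    using B_orthogonal_hyperplane[OF Suc.prems(1) v] Suc.hyps(2) Suc.prems(2) unfolding V'_def by auto
  then obtain ws where ws: "length ws = k" "set ws \<subseteq> V'" "\<forall>w\<in>set ws. B w w = 1"
    "sorted_wrt (\<lambda>v w. B v w = 0 \<and> Q v w = 0 \<and> Q w w \<le> Q v v) ws"
    using Suc.hyps(1) V' by blast
  have "B v w = 0 \<and> Q v w = 0 \<and> Q w w \<le> Q v v" if "w \<in> set ws" for w
  proof -
    have w: "w \<in> V" "B v w = 0" "B w w = 1"
      using that ws(2,3) V'_def by auto
    then show ?thesis
      using rayleigh_max_orthogonal[OF Suc.prems v max w(1,2)] max by auto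
  qed
  then have "sorted_wrt (\<lambda>v w. B v w = 0 \<and> Q v w = 0 \<and> Q w w \<le> Q v v) (v # ws)"
    using ws(4) by simp
  moreover have "set (v # ws) \<subseteq> V"
    using ws(2) v(1) V'_def by auto
  moreover have "\<forall>u\<in>set (v # ws). B u u = 1"
    using ws(3) v(2) by simp
  moreover have "length (v # ws) = dim V"
    using ws(1) Suc.hyps(2) by simp
  ultimately show ?case
    by blast
qed

lemma simultaneous_diagonalization:
  assumes "dim W = CARD('i::{finite,linorder})"
  shows "\<exists>v::'i \<Rightarrow> 'a. range v \<subseteq> W \<and> (\<forall>i j. B (v i) (v j) = (if i = j then 1 else 0)) \<and>
    (\<forall>i j. i \<noteq> j \<longrightarrow> Q (v i) (v j) = 0) \<and> antimono (\<lambda>i. Q (v i) (v i))"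
proof -
  obtain vs where vs: "length vs = CARD('i)" "set vs \<subseteq> W" "\<forall>v\<in>set vs. B v v = 1"
    and sorted: "sorted_wrt (\<lambda>v w. B v w = 0 \<and> Q v w = 0 \<and> Q w w \<le> Q v v) vs"
    using sorted_eigenbasis_exists[OF W order_refl] assms by auto
  define r :: "'i \<Rightarrow> nat" where "r i = card {k. k < i}" for i
  have r_less: "r i < r j" if "i < j" for i j
    unfolding r_def using that by (intro psubset_card_mono) auto
  have r_bound: "r i < length vs" for i
    unfolding r_def vs(1) by (rule psubset_card_mono) auto
  define v where "v i = vs ! r i" for i
  have vW: "v i \<in> W" for i
    using vs(2) nth_mem[OF r_bound] unfolding v_def by blast
  have ordered: "B (v i) (v j) = 0 \<and> Q (v i) (v j) = 0 \<and> Q (v j) (v j) \<le> Q (v i) (v i)" if "i < j" for i j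
    unfolding v_def using sorted_wrt_nth_less[OF sorted r_less[OF that] r_bound] .
  have "B (v i) (v j) = (if i = j then 1 else 0) \<and> (i \<noteq> j \<longrightarrow> Q (v i) (v j) = 0)" for i j
  proof (cases i j rule: linorder_cases)
    case less
    then show ?thesis
      using ordered by simp
  next
    case equal
    then show ?thesis
      using vs(3) nth_mem[OF r_bound] unfolding v_def by simp
  next
    case greater
    then show ?thesis
      using ordered[OF greater] sym_B[OF vW[of i] vW[of j]] sym_Q[OF vW[of i] vW[of j]] by simp
  qed
  moreover have "antimono (\<lambda>i. Q (v i) (v i))"
  proof (rule antimonoI)
    fix i j :: 'i
    assume "i \<le> j"
    then show "Q (v j) (v j) \<le> Q (v i) (v i)"
      using ordered[of i j] by (cases "i = j") auto
  qed
  ultimately show ?thesis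
    using vW by (intro exI[of _ v]) auto
qed

end

section \<open>Diagonal matrices and sorted diagonals\<close>

definition diag_mat :: "('n::finite \<Rightarrow> real) \<Rightarrow> real^'n^'n" where
  "diag_mat d = (\<chi> i j. if i = j then d i else 0)"

lemma fam_mult_diag_mat: "v \<cdot>\<^sub>f diag_mat d = (\<lambda>j. d j *\<^sub>R v j)"
  by (simp add: fun_eq_iff fam_mult_def diag_mat_def if_distrib[of "\<lambda>c. c *\<^sub>R _"] cong: if_cong)

lemma matrix_mul_diag_mat_right: "(A ** diag_mat d) $ i $ j = A $ i $ j * d j"
  by (simp add: matrix_matrix_mult_def diag_mat_def if_distrib[of "times _"] cong: if_cong)

lemma matrix_mul_diag_mat_left: "(diag_mat d ** A) $ i $ j = d i * A $ i $ j"
  by (simp add: matrix_matrix_mult_def diag_mat_def if_distrib[of "\<lambda>c. c * _"] cong: if_cong)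

lemma matrix_inv_eqI:
  fixes A :: "'a::semiring_1^'n^'n"
  assumes "A ** A' = mat 1" "A' ** A = mat 1"
  shows "matrix_inv A = A'"
  unfolding matrix_inv_def
proof (rule some_equality)
  fix A''
  assume "A ** A'' = mat 1 \<and> A'' ** A = mat 1"
  then have "A'' = (A'' ** A) ** A'"
    by (metis assms(1) matrix_mul_assoc matrix_mul_rid)
  then show "A'' = A'"
    using \<open>A ** A'' = mat 1 \<and> A'' ** A = mat 1\<close> by (simp add: matrix_mul_lid)
qed (use assms in blast)

lemma matrix_inv_diag_mat:
  assumes "\<And>i. d i \<noteq> 0"
  shows "matrix_inv (diag_mat d) = diag_mat (\<lambda>i. inverse (d i))"
  by (rule matrix_inv_eqI) (simp_all only: vec_eq_iff matrix_mul_diag_mat_right, simp_all add: diag_mat_def mat_def assms)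

lemma diag_sqrt_diag_mat: "diag_sqrt (diag_mat l) = diag_mat (\<lambda>i. sqrt (l i))"
  by (simp add: diag_sqrt_def diag_mat_def vec_eq_iff)

lemma std_diag_iff: "std_diag \<Lambda> \<longleftrightarrow> (\<exists>l. \<Lambda> = diag_mat l \<and> (\<forall>i. 0 < l i) \<and> mono l)"
proof
  assume "std_diag \<Lambda>"
  then show "\<exists>l. \<Lambda> = diag_mat l \<and> (\<forall>i. 0 < l i) \<and> mono l"
    unfolding std_diag_def diag_mat_def mono_def
    by (intro exI[of _ "\<lambda>i. \<Lambda> $ i $ i"]) (auto simp: vec_eq_iff)
qed (auto simp: std_diag_def diag_mat_def mono_def)

lemma det_nonzero_permutation:
  fixes A :: "real^'n::finite^'n"
  assumes "det A \<noteq> 0"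
  obtains p where "p permutes UNIV" "\<And>i. A $ i $ p i \<noteq> 0"
proof -
  have "\<exists>p\<in>{p. p permutes UNIV}. of_int (sign p) * (\<Prod>i\<in>UNIV. A $ i $ p i) \<noteq> 0"
  proof (rule ccontr)
    assume "\<not> ?thesis"
    then have "det A = 0"
      unfolding det_def by (intro sum.neutral) auto
    then show False
      using assms by simp
  qed
  then show ?thesis
    using that by auto
qed

lemma mono_sublevel_sets_nested:
  fixes l m :: "'a::linorder \<Rightarrow> 'b::linorder"
  assumes l: "mono l" and m: "mono m"
  shows "{i. l i \<le> t} \<subseteq> {j. m j \<le> t} \<or> {j. m j \<le> t} \<subseteq> {i. l i \<le> t}"
proof (rule ccontr)
  assume "\<not> ?thesis"
  then obtain a b where ab: "l a \<le> t" "\<not> m a \<le> t" "m b \<le> t" "\<not> l b \<le> t"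
    by blast
  show False
  proof (cases "a \<le> b")
    case True
    then show False
      using monoD[OF m True] ab by auto
  next
    case False
    then have "b \<le> a"
      by (simp add: not_le less_imp_le)
    then show False
      using monoD[OF l] ab by fastforce
  qed
qed

lemma mono_permutation_eq:
  fixes l m :: "'n::{finite,linorder} \<Rightarrow> 'b::linorder"
  assumes l: "mono l" and m: "mono m" and p: "p permutes UNIV" and pm: "\<And>i. m (p i) = l i"
  shows "l = m"
proof -
  have sublevel_eq: "{i. l i \<le> t} = {j. m j \<le> t}" for t
  proof -
    let ?A = "{i. l i \<le> t}" and ?B = "{j. m j \<le> t}"
    have "?B = p ` ?A"
    proof
      show "p ` ?A \<subseteq> ?B"
        using pm by auto
      show "?B \<subseteq> p ` ?A"
      proof
        fix j
        assume "j \<in> ?B"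
        moreover have "j = p (inv p j)"
          using permutes_inverses(1)[OF p] by simp
        ultimately show "j \<in> p ` ?A"
          using pm[of "inv p j"] by (metis (mono_tags, lifting) image_eqI mem_Collect_eq)
      qed
    qed
    then have "card ?A = card ?B"
      using card_image permutes_inj[OF p] by (metis inj_on_subset subset_UNIV)
    moreover have "?A \<subseteq> ?B \<or> ?B \<subseteq> ?A"
      by (rule mono_sublevel_sets_nested[OF l m])
    ultimately show ?thesis
      by (metis card_subset_eq finite)
  qed
  show ?thesis
  proof
    fix k
    show "l k = m k"
      using sublevel_eq[of "m k"] sublevel_eq[of "l k"] by (auto intro: order.antisym)
  qed
qed

section \<open>Standard position\<close>

lemma std_position_with_diag_mat:
  "std_position_with e f (diag_mat l) L1 M1 L2 M2 \<longleftrightarrow> std_diag (diag_mat l) \<and>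
     L1 = span (range e) \<and> L2 = span (range f) \<and> M1 = span (range (\<lambda>i. e i + f i)) \<and>
     M2 = span (range (\<lambda>i. e i - l i *\<^sub>R f i))"
  by (simp add: std_position_with_def fam_mult_diag_mat)

lemma std_position_withI:
  fixes e f :: "'n::{finite,linorder} \<Rightarrow> 'n sp"
  assumes lag: "lagrangian L1" "lagrangian M1" "lagrangian L2" "lagrangian M2"
    and sb: "symplectic_basis e f"
    and mem: "\<And>i. e i \<in> L1" "\<And>i. f i \<in> L2" "\<And>i. e i + f i \<in> M1" "\<And>i. e i - l i *\<^sub>R f i \<in> M2"
    and l: "\<And>i. 0 < l i" "mono l"
  shows "std_position_with e f (diag_mat l) L1 M1 L2 M2"
proof -
  note d = symplectic_basisD[OF sb]
  have "L1 = span (range e)"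
    by (rule lagrangian_eq_span[OF lag(1), where w = f]) (auto simp: mem d)
  moreover have "L2 = span (range f)"
    by (rule lagrangian_eq_span[OF lag(3), where w = "\<lambda>j. - e j"]) (auto simp: mem d omega_simps)
  moreover have "M1 = span (range (\<lambda>i. e i + f i))"
    by (rule lagrangian_eq_span[OF lag(2), where w = f]) (auto simp: mem d omega_simps)
  moreover have "M2 = span (range (\<lambda>i. e i - l i *\<^sub>R f i))"
    by (rule lagrangian_eq_span[OF lag(4), where w = f]) (auto simp: mem d omega_simps)
  moreover have "std_diag (diag_mat l)"
    using l std_diag_iff by blast
  ultimately show ?thesis
    by (simp add: std_position_with_diag_mat)
qed

lemma positive_quadruple_eigenbasis:
  fixes L1 M1 L2 M2 :: "'n::{finite,linorder} sp set"
  assumes "positive_quadruple L1 M1 L2 M2"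
  defines "T \<equiv> graph_map L1 M1 L2"
  defines "Q \<equiv> \<lambda>x y. maslov_form L2 M2 L1 (T x) (T y)"
  obtains e :: "'n \<Rightarrow> 'n sp" where "range e \<subseteq> L1"
    and "\<And>i j. maslov_form L1 M1 L2 (e i) (e j) = (if i = j then 1 else 0)"
    and "\<And>i j. i \<noteq> j \<Longrightarrow> Q (e i) (e j) = 0" and "\<And>i. Q (e i) (e i) > 0"
    and "antimono (\<lambda>i. Q (e i) (e i))"
proof -
  have lag: "lagrangian L1" "lagrangian M1" "lagrangian L2" "lagrangian M2"
    and tr: "transverse L1 M1" "transverse M1 L2" "transverse M2 L1"
    and pos1: "pos_def_on L1 (maslov_form L1 M1 L2)" and pos2: "pos_def_on L2 (maslov_form L2 M2 L1)"
    using assms(1) unfolding positive_quadruple_def pw_transverse_def by auto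
  note T = graph_map[OF lag(3,2) tr(2), where K = L1, folded T_def]
  have "maslov_form L1 M1 L2 = (\<lambda>x y. omega x (T y))"
    and "Q = (\<lambda>x y. omega (T x) (graph_map L2 M2 L1 (T y)))"
    by (simp_all add: fun_eq_iff maslov_form_def T_def Q_def)
  moreover note lin = linear_graph_map[OF lag(3,2) tr(2)] linear_graph_map[OF lag(1,4) tr(3)]
  ultimately have bilinear: "bilinear (maslov_form L1 M1 L2)" "bilinear Q"
    unfolding T_def
    by (simp_all add: bilinear_omega_linear[OF linear_ident lin(1)]
        bilinear_omega_linear[OF lin(1) linear_compose[OF lin(1) lin(2), unfolded comp_def]])
  have sym_B: "maslov_form L1 M1 L2 x y = maslov_form L1 M1 L2 y x" if "x \<in> L1" "y \<in> L1" for x y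
    by (rule maslov_form_sym[OF lag(1,2,3) tr(2) that])
  have sym_Q: "Q x y = Q y x" for x y
    unfolding Q_def by (rule maslov_form_sym[OF lag(3,4,1) tr(3) T(1) T(1)])
  have pos_B: "maslov_form L1 M1 L2 x x > 0" if "x \<in> L1" "x \<noteq> 0" for x
    using pos1 that by (simp add: pos_def_on_def)
  have pos_Q: "Q x x > 0" if "x \<in> L1" "x \<noteq> 0" for x
  proof -
    have "T x \<noteq> 0"
    proof
      assume "T x = 0"
      then have "x \<in> L1 \<inter> M1"
        using that(1) T(2)[of x] by simp
      then show False
        using tr(1) that(2) unfolding transverse_def by blast
    qed
    then show ?thesis
      using pos2 T(1)[of x] unfolding pos_def_on_def Q_def by blast
  qed
  have L1: "subspace L1" "dim L1 = CARD('n)"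
    using lag(1) by (simp_all add: lagrangian_def)
  obtain e :: "'n \<Rightarrow> 'n sp" where e: "range e \<subseteq> L1"
    and B_e: "\<And>i j. maslov_form L1 M1 L2 (e i) (e j) = (if i = j then 1 else 0)"
    and "\<And>i j. i \<noteq> j \<Longrightarrow> Q (e i) (e j) = 0" and "antimono (\<lambda>i. Q (e i) (e i))"
    using simultaneous_diagonalization[OF L1(1) bilinear sym_B sym_Q pos_B L1(2)] by blast
  moreover have "Q (e i) (e i) > 0" for i
  proof -
    have "e i \<noteq> 0"
      using B_e[of i i] by (auto simp: maslov_form_def omega_simps)
    then show ?thesis
      using pos_Q e by blast
  qed
  ultimately show ?thesis
    using that by blast
qed

lemma positive_quadruple_std_position:
  fixes L1 M1 L2 M2 :: "'n::{finite,linorder} sp set"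
  assumes "positive_quadruple L1 M1 L2 M2"
  shows "\<exists>e f \<Lambda>. symplectic_basis e f \<and> std_position_with e f \<Lambda> L1 M1 L2 M2"
proof -
  have lag: "lagrangian L1" "lagrangian M1" "lagrangian L2" "lagrangian M2"
    and tr: "transverse M1 L2" "transverse M2 L1"
    using assms unfolding positive_quadruple_def pw_transverse_def by auto
  define T where "T = graph_map L1 M1 L2"
  define S where "S = graph_map L2 M2 L1"
  note T = graph_map[OF lag(3,2) tr(1), where K = L1, folded T_def]
  note S = graph_map[OF lag(1,4) tr(2), where K = L2, folded S_def]
  obtain e :: "'n \<Rightarrow> 'n sp" where e: "range e \<subseteq> L1"
    and ef: "\<And>i j. omega (e i) (T (e j)) = (if i = j then 1 else 0)"
    and ff: "\<And>i j. i \<noteq> j \<Longrightarrow> omega (T (e i)) (S (T (e j))) = 0"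
    and positive: "\<And>i. omega (T (e i)) (S (T (e i))) > 0"
    and sorted: "antimono (\<lambda>i. omega (T (e i)) (S (T (e i))))"
    using positive_quadruple_eigenbasis[OF assms] unfolding maslov_form_def T_def S_def by blast
  define f where "f i = T (e i)" for i
  define \<mu> where "\<mu> i = omega (f i) (S (f i))" for i
  have eL1: "e i \<in> L1" and fL2: "f i \<in> L2" and efM1: "e i + f i \<in> M1" for i
    using e T unfolding f_def by auto
  have \<mu>_pos: "\<mu> i > 0" for i
    unfolding \<mu>_def f_def by (rule positive)
  have sb: "symplectic_basis e f"
    by (rule symplectic_basisI[OF lagrangian_isotropic[OF lag(1) eL1 eL1]
          lagrangian_isotropic[OF lag(3) fL2 fL2] ef[folded f_def]])
  have S_f: "S (f j) = (- \<mu> j) *\<^sub>R e j" for j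
  proof -
    have "omega (S (f j)) (f i) = (if i = j then - \<mu> j else 0)" for i
      using ff[of i j] omega_antisym[of "S (f j)" "f i"] by (auto simp: f_def \<mu>_def)
    moreover have "omega (S (f j)) (e i) = 0" for i
      by (rule lagrangian_isotropic[OF lag(1) S(1) eL1])
    ultimately show ?thesis
      using symplectic_basis_expansion_e[OF sb, of "S (f j)"]
      by (simp add: if_distrib[of "\<lambda>c. c *\<^sub>R _"] cong: if_cong)
  qed
  have M2: "e j - inverse (\<mu> j) *\<^sub>R f j \<in> M2" for j
  proof -
    have "e j - inverse (\<mu> j) *\<^sub>R f j = (- inverse (\<mu> j)) *\<^sub>R (f j + S (f j))"
      using \<mu>_pos[of j] by (simp add: S_f algebra_simps)
    then show ?thesis
      using lag(4) S(2)[of "f j"] by (simp only: lagrangian_def subspace_scale)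
  qed
  have "mono (\<lambda>i. inverse (\<mu> i))"
  proof (rule monoI)
    fix i j :: 'n
    assume "i \<le> j"
    then have "\<mu> j \<le> \<mu> i"
      using sorted by (simp add: antimono_def \<mu>_def f_def)
    then show "inverse (\<mu> i) \<le> inverse (\<mu> j)"
      using \<mu>_pos by (rule le_imp_inverse_le)
  qed
  then have "std_position_with e f (diag_mat (\<lambda>i. inverse (\<mu> i))) L1 M1 L2 M2"
    using \<mu>_pos by (intro std_position_withI[OF lag sb eL1 fL2 efM1 M2]) simp_all
  then show ?thesis
    using sb by blast
qed

lemma std_position_mem:
  assumes "std_position_with e f (diag_mat l) L1 M1 L2 M2"
  shows "e i \<in> L1" "f i \<in> L2" "e i + f i \<in> M1" "e i - l i *\<^sub>R f i \<in> M2"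
  using assms unfolding std_position_with_diag_mat by (auto intro: span_base)

lemma std_position_isotropic:
  assumes sb: "symplectic_basis e f" and sp: "std_position_with e f (diag_mat l) L1 M1 L2 M2"
  shows "x \<in> L1 \<Longrightarrow> y \<in> L1 \<Longrightarrow> omega x y = 0" and "x \<in> M1 \<Longrightarrow> y \<in> M1 \<Longrightarrow> omega x y = 0"
    and "x \<in> L2 \<Longrightarrow> y \<in> L2 \<Longrightarrow> omega x y = 0" and "x \<in> M2 \<Longrightarrow> y \<in> M2 \<Longrightarrow> omega x y = 0"
proof -
  note d = symplectic_basisD[OF sb]
  have spans: "L1 = span (range e)" "M1 = span (range (\<lambda>i. e i + f i))" "L2 = span (range f)"
    "M2 = span (range (\<lambda>i. e i - l i *\<^sub>R f i))"
    using sp by (simp_all add: std_position_with_diag_mat)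
  have iso_M1: "omega (e i + f i) (e j + f j) = 0" for i j
    by (simp add: omega_simps d)
  have iso_M2: "omega (e i - l i *\<^sub>R f i) (e j - l j *\<^sub>R f j) = 0" for i j
    by (cases "i = j") (simp_all add: omega_simps d)
  show "x \<in> L1 \<Longrightarrow> y \<in> L1 \<Longrightarrow> omega x y = 0"
    unfolding spans by (rule omega_isotropic_span[OF d(1)])
  show "x \<in> M1 \<Longrightarrow> y \<in> M1 \<Longrightarrow> omega x y = 0"
    unfolding spans by (rule omega_isotropic_span[OF iso_M1])
  show "x \<in> L2 \<Longrightarrow> y \<in> L2 \<Longrightarrow> omega x y = 0"
    unfolding spans by (rule omega_isotropic_span[OF d(2)])
  show "x \<in> M2 \<Longrightarrow> y \<in> M2 \<Longrightarrow> omega x y = 0"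
    unfolding spans by (rule omega_isotropic_span[OF iso_M2])
qed

lemma std_position_transition:
  assumes sb: "symplectic_basis e f" and sp: "std_position_with e f (diag_mat l) L1 M1 L2 M2"
    and sb2: "symplectic_basis e2 f2" and sp2: "std_position_with e2 f2 (diag_mat l2) L1 M1 L2 M2"
  defines "h \<equiv> \<chi> i j. omega (e2 j) (f i)"
  shows "e2 = e \<cdot>\<^sub>f h" and "f2 = f \<cdot>\<^sub>f h" and "orthogonal_matrix h"
    and "l2 j * h $ k $ j = l k * h $ k $ j"
proof -
  note iso = std_position_isotropic[OF sb sp]
  note mem = std_position_mem[OF sp] std_position_mem[OF sp2]
  have ee2: "omega (e2 j) (e i) = 0" and ff2: "omega (f2 j) (f i) = 0" for i j
    by (rule iso(1)[OF mem(5) mem(1)], rule iso(3)[OF mem(6) mem(2)])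
  have fe2: "omega (f2 j) (e i) = - h $ i $ j" for i j
  proof -
    have "omega (e2 j + f2 j) (e i + f i) = 0"
      by (rule iso(2)[OF mem(7) mem(3)])
    then show ?thesis
      by (simp add: omega_simps ee2 ff2 h_def)
  qed
  show e2: "e2 = e \<cdot>\<^sub>f h"
    using symplectic_basis_expansion_e[OF sb ee2] by (simp add: fun_eq_iff fam_mult_def h_def)
  show f2: "f2 = f \<cdot>\<^sub>f h"
    using symplectic_basis_expansion_f[OF sb ff2] by (simp add: fun_eq_iff fam_mult_def fe2 sum_negf)
  have "(transpose h ** h) $ i $ j = mat 1 $ i $ j" for i j
  proof -
    have "omega (e2 i) (f2 j) = (\<Sum>k\<in>UNIV. h $ k $ j * h $ k $ i)"
      by (subst f2) (simp add: fam_mult_def omega_simps h_def)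
    then show ?thesis
      using symplectic_basisD(3)[OF sb2, of i j]
      by (simp add: matrix_matrix_mult_def transpose_def mat_def mult.commute)
  qed
  then have "transpose h ** h = mat 1"
    by (simp add: vec_eq_iff)
  then show "orthogonal_matrix h"
    unfolding orthogonal_matrix_def using matrix_left_right_inverse by blast
  have "omega (e2 j - l2 j *\<^sub>R f2 j) (e k - l k *\<^sub>R f k) = 0"
    by (rule iso(4)[OF mem(8) mem(4)])
  then show "l2 j * h $ k $ j = l k * h $ k $ j"
    by (simp add: omega_simps ee2 ff2 fe2 h_def)
qed

lemma std_position_unique:
  assumes sb: "symplectic_basis e f" and sp: "std_position_with e f \<Lambda> L1 M1 L2 M2"
    and sb2: "symplectic_basis e2 f2" and sp2: "std_position e2 f2 L1 M1 L2 M2"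
  shows "\<exists>h. orthogonal_matrix h \<and> h ** \<Lambda> = \<Lambda> ** h \<and> e2 = e \<cdot>\<^sub>f h \<and> f2 = f \<cdot>\<^sub>f h"
proof -
  obtain \<Lambda>2 where sp2: "std_position_with e2 f2 \<Lambda>2 L1 M1 L2 M2"
    using sp2 unfolding std_position_def by blast
  obtain l where \<Lambda>: "\<Lambda> = diag_mat l" and l: "mono l"
    using sp by (auto simp: std_position_with_def std_diag_iff)
  obtain l2 where \<Lambda>2: "\<Lambda>2 = diag_mat l2" and l2: "mono l2"
    using sp2 by (auto simp: std_position_with_def std_diag_iff)
  define h where "h = (\<chi> i j. omega (e2 j) (f i))"
  note transition = std_position_transition[OF sb sp[unfolded \<Lambda>] sb2 sp2[unfolded \<Lambda>2], folded h_def]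
  have "det h \<noteq> 0"
    using det_orthogonal_matrix[OF transition(3)] by auto
  then obtain p where p: "p permutes UNIV" "\<And>i. h $ i $ p i \<noteq> 0"
    using det_nonzero_permutation by blast
  have "l2 (p i) = l i" for i
    using transition(4)[of "p i" i] p(2)[of i] by simp
  then have "l = l2"
    by (rule mono_permutation_eq[OF l l2 p(1)])
  then have "h ** \<Lambda> = \<Lambda> ** h"
    using transition(4)
    by (simp add: vec_eq_iff \<Lambda> matrix_mul_diag_mat_right matrix_mul_diag_mat_left mult.commute)
  then show ?thesis
    using transition(1-3) by blast
qed

lemma std_position_swap:
  assumes sb: "symplectic_basis e f" and sp: "std_position_with e f \<Lambda> L1 M1 L2 M2"
  defines "u \<equiv> diag_sqrt \<Lambda>"
  shows "symplectic_basis (f \<cdot>\<^sub>f u) (\<lambda>i. - (e \<cdot>\<^sub>f matrix_inv u) i)"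
    and "std_position_with (f \<cdot>\<^sub>f u) (\<lambda>i. - (e \<cdot>\<^sub>f matrix_inv u) i) \<Lambda> L2 M2 L1 M1"
proof -
  obtain l where \<Lambda>: "\<Lambda> = diag_mat l" and l: "\<And>i. 0 < l i"
    using sp by (auto simp: std_position_with_def std_diag_iff)
  define s where "s i = sqrt (l i)" for i
  have s: "s i > 0" "s i * s i = l i" for i
    using l[of i] by (simp_all add: s_def)
  have nz: "s j \<noteq> 0" "- inverse (s j) \<noteq> 0" for j
    using s(1)[of j] by auto
  have e': "f \<cdot>\<^sub>f u = (\<lambda>j. s j *\<^sub>R f j)"
    by (simp add: u_def \<Lambda> diag_sqrt_diag_mat fam_mult_diag_mat s_def)
  have f': "(\<lambda>i. - (e \<cdot>\<^sub>f matrix_inv u) i) = (\<lambda>j. (- inverse (s j)) *\<^sub>R e j)"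
    by (simp add: u_def \<Lambda> diag_sqrt_diag_mat s_def[symmetric] matrix_inv_diag_mat[OF nz(1)] fam_mult_diag_mat)
  note d = symplectic_basisD[OF sb]
  show "symplectic_basis (f \<cdot>\<^sub>f u) (\<lambda>i. - (e \<cdot>\<^sub>f matrix_inv u) i)"
    unfolding e' f' by (intro symplectic_basisI) (auto simp: omega_simps d nz(1))
  have spans: "L1 = span (range e)" "L2 = span (range f)" "M1 = span (range (\<lambda>i. e i + f i))"
    "M2 = span (range (\<lambda>i. e i - l i *\<^sub>R f i))" and diag: "std_diag (diag_mat l)"
    using sp by (simp_all add: \<Lambda> std_position_with_diag_mat)
  have inv_l: "inverse (s j) * l j = s j" "l j * inverse (s j) = s j" for j
    using nz(1)[of j] unfolding s(2)[symmetric] by (simp_all add: field_simps)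
  have M2: "(\<lambda>j. s j *\<^sub>R f j + (- inverse (s j)) *\<^sub>R e j) = (\<lambda>j. (- inverse (s j)) *\<^sub>R (e j - l j *\<^sub>R f j))"
    by (simp add: fun_eq_iff scaleR_diff_right inv_l)
  have M1: "(\<lambda>j. s j *\<^sub>R f j - l j *\<^sub>R (- inverse (s j)) *\<^sub>R e j) = (\<lambda>j. s j *\<^sub>R (e j + f j))"
    by (simp add: fun_eq_iff scaleR_add_right inv_l)
  show "std_position_with (f \<cdot>\<^sub>f u) (\<lambda>i. - (e \<cdot>\<^sub>f matrix_inv u) i) \<Lambda> L2 M2 L1 M1"
    unfolding e' f' \<Lambda> std_position_with_diag_mat M1 M2
    by (simp only: span_range_scaleR[OF nz(1)] span_range_scaleR[OF nz(2)] spans diag simp_thms)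
qed

theorem proposition3p6:
  fixes L1 M1 L2 M2 :: "('n::{finite,linorder}) sp set"
  assumes "positive_quadruple L1 M1 L2 M2"
  shows "\<exists>e f \<Lambda>.
     symplectic_basis e f \<and> std_position_with e f \<Lambda> L1 M1 L2 M2 \<and>
     (\<forall>e2 f2. symplectic_basis e2 f2 \<and> std_position e2 f2 L1 M1 L2 M2 \<longrightarrow>
        (\<exists>h. orthogonal_matrix h \<and> h ** \<Lambda> = \<Lambda> ** h \<and> e2 = e \<cdot>\<^sub>f h \<and> f2 = f \<cdot>\<^sub>f h)) \<and>
     (let u = diag_sqrt \<Lambda>;
          e' = f \<cdot>\<^sub>f u;
          f' = (\<lambda>i. - (e \<cdot>\<^sub>f matrix_inv u) i)
      in symplectic_basis e' f' \<and> std_position e' f' L2 M2 L1 M1)"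
proof -
  obtain e f \<Lambda> where sb: "symplectic_basis e f" and sp: "std_position_with e f \<Lambda> L1 M1 L2 M2"
    using positive_quadruple_std_position[OF assms] by blast
  moreover have "\<forall>e2 f2. symplectic_basis e2 f2 \<and> std_position e2 f2 L1 M1 L2 M2 \<longrightarrow>
      (\<exists>h. orthogonal_matrix h \<and> h ** \<Lambda> = \<Lambda> ** h \<and> e2 = e \<cdot>\<^sub>f h \<and> f2 = f \<cdot>\<^sub>f h)"
    using std_position_unique[OF sb sp] by blast
  moreover have "symplectic_basis (f \<cdot>\<^sub>f diag_sqrt \<Lambda>) (\<lambda>i. - (e \<cdot>\<^sub>f matrix_inv (diag_sqrt \<Lambda>)) i)"
    and "std_position (f \<cdot>\<^sub>f diag_sqrt \<Lambda>) (\<lambda>i. - (e \<cdot>\<^sub>f matrix_inv (diag_sqrt \<Lambda>)) i) L2 M2 L1 M1"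
    using std_position_swap[OF sb sp] unfolding std_position_def by blast+
  ultimately show ?thesis
    unfolding Let_def by blast
qed

end
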